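(* Let $m\in\mathbb{N}$, let $f_0,\dots,f_m\in\mathbb{C}[[z]]$ be in general position, let $n\ge m-1$, and write $n=m-1+(m+1)k+\ell$ with $\ell\in\{0,\dots,m\}$, $k\in\{0,1,2,\dots\}$. Put $Q_{\mathbf{k}^{[n]},j}:=A_{m+1,m+1-j}^{[n]}$, $j=0,\dots,m$. 1) If $\ell=0$, then $\deg A_{m+1,s}^{[n]}=k$ for all $s=1,\dots,m+1$, and $(Q_{\mathbf{k}^{[n]},0},\dots,Q_{\mathbf{k}^{[n]},m})$ is a tuple of Hermite–Padé polynomials of type I for $[f_0,\dots,f_m]$ and the multiindex $\mathbf{k}^{[n]}=(k,\dots,k)$, with order of tangency $(m+1)k+m=n+1$, i.e. $\sum_{j=0}^mQ_{\mathbf{k}^{[n]},j}f_j=O(z^{n+1})$. 2) If $\ell\in\{1,\dots,m\}$, then $\deg A_{m+1,m+1-s}^{[n]}=k+1$ for $s=0,\dots,\ell-1$ and $\deg A_{m+1,m+1-s}^{[n]}=k$ for $s=\ell,\dots,m$, and $(Q_{\mathbf{k}^{[n]},0},\dots,Q_{\mathbf{k}^{[n]},m})$ is a tuple of Hermite–Padé polynomials of type I for $[f_0,\dots,f_m]$ and the multiindex $\mathbf{k}^{[n]}=(\underbrace{k+1,\dots,k+1}_{\ell},\underbrace{k,\dots,k}_{m+1-\ell})$, with order of tangency $|\mathbf{k}^{[n]}|+m=(m+1)k+m+\ell=n+1$, i.e. $\sum_{j=0}^mQ_{\mathbf{k}^{[n]},j}f_j=O(z^{n+1})$. In both cases $\mathbf{k}^{[n]}=(k_0,\dots,k_m)$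 with $k_j=\deg A_{m+1,m+1-j}^{[n]}$ and $|\mathbf{k}^{[n]}|+m=n+1$.
   Context: For $g\in\mathbb{C}[[z]]$, $g=O(z^N)$ means the coefficients of $z^0,\dots,z^{N-1}$ vanish. For $\mathbf{k}=(k_0,\dots,k_m)\in\mathbb{Z}_+^{m+1}$, $|\mathbf{k}|=\sum k_j$, a tuple of polynomials $(Q_0,\dots,Q_m)$, not all zero, with $\deg Q_j\le k_j$ and $\sum_jQ_jf_j=O(z^{|\mathbf{k}|+m})$ is a tuple of Hermite–Padé polynomials of type I for $[f_0,\dots,f_m]$ and $\mathbf{k}$ ($|\mathbf{k}|+m$ is the order of tangency). Construction: put $f_j^{[0]}:=f_j$, $j=0,\dots,m$. Recursively for $n\ge0$: let $c_j^{[n]}$ be the constant term of $f_j^{[n]}$; $a_j^{[n]}:=-c_j^{[n]}/c_{j-1}^{[n]}$ ($j=1,\dots,m$); $f_m^{[n+1]}:=f_0^{[n]}$, $f_j^{[n+1]}:=z^{-1}(f_{j+1}^{[n]}+a_{j+1}^{[n]}f_j^{[n]})$ ($j=0,\dots,m-1$). $M^{[n]}$ is the $(m+1)\times(m+1)$ polynomial matrix whose first row is $(0,\dots,0,z)$ and whose $i$-th row, $i=2,\dots,m+1$, has $1$ in column $i-1$, $a_{m+2-i}^{[n]}$ in column $i$, zeros elsewhere; $A^{[n]}:=M^{[n]}\cdots M^{[0]}$ with entries $A_{i,s}^{[n]}\in\mathbb{C}[z]$. General position: all $c_j^{[n]}\neq0$, and for every $n\ge0$ and every entry of $A^{[n+1]}=M^{[n+1]}A^{[n]}$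 (a sum of at most two products of an entry of $M^{[n+1]}$ and an entry of $A^{[n]}$), the degree of the entry equals the maximum of the degrees of these products (zero polynomial has degree $-\infty$). *)

theory Defs
  imports "HOL-Computational_Algebra.Computational_Algebra"
          "HOL-Computational_Algebra.Polynomial_FPS"
          "HOL-Library.Extended_Real"
begin

definition pdeg :: "complex poly \<Rightarrow> ereal" where
  "pdeg p = (if p = 0 then -\<infinity> else ereal (real (degree p)))"

definition bigO_z :: "complex fps \<Rightarrow> nat \<Rightarrow> bool" where
  "bigO_z g N = (\<forall>i<N. fps_nth g i = 0)"

definition hp_typeI :: "nat \<Rightarrow> (nat \<Rightarrow> complex fps) \<Rightarrow> (nat \<Rightarrow> nat) \<Rightarrow> (nat \<Rightarrow> complex poly) \<Rightarrow> bool" where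
  "hp_typeI m f kk Q =
     ((\<exists>j\<le>m. Q j \<noteq> 0) \<and> (\<forall>j\<le>m. degree (Q j) \<le> kk j) \<and>
      bigO_z (\<Sum>j\<le>m. fps_of_poly (Q j) * f j) ((\<Sum>j\<le>m. kk j) + m))"

text \<open>The functions f_j^[n] (indices j = 0..m; z^{-1} applied via fps_shift 1).\<close>
primrec fsys :: "nat \<Rightarrow> (nat \<Rightarrow> complex fps) \<Rightarrow> nat \<Rightarrow> nat \<Rightarrow> complex fps" where
  "fsys m f 0 = f"
| "fsys m f (Suc n) =
     (let g = fsys m f n;
          a = (\<lambda>j. - fps_nth (g j) 0 / fps_nth (g (j - 1)) 0)
      in (\<lambda>j. if j < m then fps_shift 1 (g (Suc j) + fps_const (a (Suc j)) * g j)
              else if j = m then g 0 else 0))"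

definition cc :: "nat \<Rightarrow> (nat \<Rightarrow> complex fps) \<Rightarrow> nat \<Rightarrow> nat \<Rightarrow> complex" where
  "cc m f n j = fps_nth (fsys m f n j) 0"

definition acoef :: "nat \<Rightarrow> (nat \<Rightarrow> complex fps) \<Rightarrow> nat \<Rightarrow> nat \<Rightarrow> complex" where
  "acoef m f n j = - cc m f n j / cc m f n (j - 1)"

text \<open>The matrix M^[n], rows and columns indexed by 1..m+1.\<close>
definition Mmat :: "nat \<Rightarrow> (nat \<Rightarrow> complex fps) \<Rightarrow> nat \<Rightarrow> nat \<Rightarrow> nat \<Rightarrow> complex poly" where
  "Mmat m f n i t =
     (if i = 1 then (if t = m + 1 then [:0, 1:] else 0)
      else if 2 \<le> i \<and> i \<le> m + 1 then
        (if t = i - 1 then 1 else if t = i then [:acoef m f n (m + 2 - i):] else 0)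
      else 0)"

definition matmul :: "nat \<Rightarrow> (nat \<Rightarrow> nat \<Rightarrow> complex poly) \<Rightarrow> (nat \<Rightarrow> nat \<Rightarrow> complex poly)
                       \<Rightarrow> nat \<Rightarrow> nat \<Rightarrow> complex poly" where
  "matmul m P R i s = (\<Sum>t=1..m+1. P i t * R t s)"

primrec Amat :: "nat \<Rightarrow> (nat \<Rightarrow> complex fps) \<Rightarrow> nat \<Rightarrow> nat \<Rightarrow> nat \<Rightarrow> complex poly" where
  "Amat m f 0 = Mmat m f 0"
| "Amat m f (Suc n) = matmul m (Mmat m f (Suc n)) (Amat m f n)"

definition general_position :: "nat \<Rightarrow> (nat \<Rightarrow> complex fps) \<Rightarrow> bool" where
  "general_position m f =
     ((\<forall>n. \<forall>j\<le>m. cc m f n j \<noteq> 0) \<and>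
      (\<forall>n. \<forall>i\<in>{1..m+1}. \<forall>s\<in>{1..m+1}.
         pdeg (Amat m f (Suc n) i s) =
         Max ((\<lambda>t. pdeg (Mmat m f (Suc n) i t * Amat m f n t s)) ` {1..m+1})))"

end

theory Submission
  imports Defs
begin

text \<open>
  Row \<open>i\<close> of \<open>A[n]\<close> applied to \<open>(f m, \<dots>, f 0)\<close> telescopes along the recursion
  for the \<open>f[n]\<close> to \<open>z^(n+1) \<cdot> f[n+1] (m + 1 - i)\<close>, so the last row yields a remainder
  of order \<open>n + 1\<close>. For the degrees, entry \<open>(i, s)\<close> of \<open>A[n]\<close> is a sum over paths
  \<open>s \<rightarrow> i\<close> of length \<open>n + 1\<close> in the cycle \<open>1 \<rightarrow> 2 \<rightarrow> \<dots> \<rightarrow> m + 1 \<rightarrow> 1\<close> with loops at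
  \<open>2, \<dots>, m + 1\<close>, each passage \<open>m + 1 \<rightarrow> 1\<close> contributing a factor \<open>z\<close>. General position
  excludes cancellation, so the degree is the largest number of passages,
  \<open>(n + 1 + s - i) div (m + 1)\<close>, whenever such a path exists.
\<close>

declare sum.cl_ivl_Suc[simp del] fsys.simps(2)[simp del]

lemma Mmat_row:
  assumes "2 \<le> i" "i \<le> m + 1"
  shows "Mmat m f n i t =
    (if t = i - 1 then 1 else if t = i then [:acoef m f n (m + 2 - i):] else 0)"
  using assms by (simp add: Mmat_def)

lemma sum_Mmat_first_row:
  fixes g :: "complex poly \<Rightarrow> 'a::comm_semiring_1"
  assumes "g 0 = 0"
  shows "(\<Sum>t=1..m+1. g (Mmat m f n 1 t) * h t) = g [:0, 1:] * h (m + 1)"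
proof -
  have "(\<Sum>t=1..m+1. g (Mmat m f n 1 t) * h t) =
      (\<Sum>t=1..m+1. if t = m + 1 then g [:0, 1:] * h (m + 1) else 0)"
    using assms by (intro sum.cong) (auto simp: Mmat_def)
  then show ?thesis
    by simp
qed

lemma sum_Mmat_row:
  fixes g :: "complex poly \<Rightarrow> 'a::comm_semiring_1"
  assumes "g 0 = 0" "2 \<le> i" "i \<le> m + 1"
  shows "(\<Sum>t=1..m+1. g (Mmat m f n i t) * h t) =
    g 1 * h (i - 1) + g [:acoef m f n (m + 2 - i):] * h i"
proof -
  have "(\<Sum>t=1..m+1. g (Mmat m f n i t) * h t) =
      (\<Sum>t=1..m+1. (if t = i - 1 then g 1 * h (i - 1) else 0)
                 + (if t = i then g [:acoef m f n (m + 2 - i):] * h i else 0))"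
    using assms by (intro sum.cong) (auto simp: Mmat_row)
  also have "\<dots> = g 1 * h (i - 1) + g [:acoef m f n (m + 2 - i):] * h i"
    using assms by (auto simp: sum.distrib)
  finally show ?thesis .
qed

lemma matmul_Mmat_first_row: "matmul m (Mmat m f n) B 1 s = [:0, 1:] * B (m + 1) s"
  using sum_Mmat_first_row[where g = id and h = "\<lambda>t. B t s"] by (simp add: matmul_def)

lemma fsys_Suc_last: "fsys m f (Suc n) m = fsys m f n 0"
  by (simp add: Let_def fsys.simps(2))

lemma fps_X_mult_fsys_Suc:
  assumes "j < m" "cc m f n j \<noteq> 0"
  shows "fps_X * fsys m f (Suc n) j =
    fsys m f n (Suc j) + fps_const (acoef m f n (Suc j)) * fsys m f n j"
proof -
  define g where "g = fsys m f n (Suc j) + fps_const (acoef m f n (Suc j)) * fsys m f n j"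
  have "g $ 0 = 0"
    using assms(2) unfolding g_def acoef_def cc_def by (simp add: field_simps)
  then have "fps_X * fps_shift 1 g = g"
    by (intro fps_ext) auto
  moreover have "fsys m f (Suc n) j = fps_shift 1 g"
    using assms(1) unfolding g_def acoef_def cc_def by (simp add: Let_def fsys.simps(2))
  ultimately show ?thesis
    unfolding g_def by simp
qed

lemma Mmat_times_fsys:
  assumes "\<forall>j\<le>m. cc m f n j \<noteq> 0" "1 \<le> i" "i \<le> m + 1"
  shows "(\<Sum>t=1..m+1. fps_of_poly (Mmat m f n i t) * fsys m f n (m + 1 - t)) =
    fps_X * fsys m f (Suc n) (m + 1 - i)"
proof (cases "i = 1")
  case True
  show ?thesis
    unfolding True by (subst sum_Mmat_first_row) (simp_all add: fsys_Suc_last)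
next
  case False
  then have i: "2 \<le> i" "i \<le> m + 1"
    using assms by auto
  have "m + 1 - (i - 1) = Suc (m + 1 - i)" "m + 2 - i = Suc (m + 1 - i)"
    using i by auto
  then show ?thesis
    using assms i by (subst sum_Mmat_row) (simp_all add: fps_X_mult_fsys_Suc fps_of_poly_const)
qed

lemma Amat_times_f:
  assumes "\<forall>n. \<forall>j\<le>m. cc m f n j \<noteq> 0" "1 \<le> i" "i \<le> m + 1"
  shows "(\<Sum>s=1..m+1. fps_of_poly (Amat m f n i s) * f (m + 1 - s)) =
    fps_X ^ Suc n * fsys m f (Suc n) (m + 1 - i)"
  using assms(2,3)
proof (induction n arbitrary: i)
  case 0
  then show ?case
    using Mmat_times_fsys[of m f 0 i] assms(1) by simp
next
  case (Suc n)
  let ?M = "\<lambda>t. fps_of_poly (Mmat m f (Suc n) i t)"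
  have "(\<Sum>s=1..m+1. fps_of_poly (Amat m f (Suc n) i s) * f (m + 1 - s))
      = (\<Sum>t=1..m+1. ?M t * (\<Sum>s=1..m+1. fps_of_poly (Amat m f n t s) * f (m + 1 - s)))"
    unfolding Amat.simps matmul_def fps_of_poly_sum fps_of_poly_mult sum_distrib_left
      sum_distrib_right mult.assoc
    by (rule sum.swap)
  also have "\<dots> = (\<Sum>t=1..m+1. ?M t * (fps_X ^ Suc n * fsys m f (Suc n) (m + 1 - t)))"
    by (intro sum.cong refl, subst Suc.IH) auto
  also have "\<dots> = fps_X ^ Suc n * (\<Sum>t=1..m+1. ?M t * fsys m f (Suc n) (m + 1 - t))"
    by (simp add: sum_distrib_left mult.left_commute)
  also have "\<dots> = fps_X ^ Suc (Suc n) * fsys m f (Suc (Suc n)) (m + 1 - i)"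
    using Mmat_times_fsys[of m f "Suc n" i] assms(1) Suc.prems by simp
  finally show ?case .
qed

lemma last_row_remainder:
  assumes "\<forall>n. \<forall>j\<le>m. cc m f n j \<noteq> 0"
  shows "(\<Sum>j\<le>m. fps_of_poly (Amat m f n (m + 1) (m + 1 - j)) * f j) =
    fps_X ^ Suc n * fsys m f (Suc n) 0"
proof -
  have "(\<Sum>j\<le>m. fps_of_poly (Amat m f n (m + 1) (m + 1 - j)) * f j)
      = (\<Sum>s=1..m+1. fps_of_poly (Amat m f n (m + 1) s) * f (m + 1 - s))"
    by (rule sum.reindex_bij_witness[where i = "\<lambda>s. m + 1 - s" and j = "\<lambda>j. m + 1 - j"]) auto
  also have "\<dots> = fps_X ^ Suc n * fsys m f (Suc n) 0"
    using Amat_times_f[OF assms, of "m + 1" n] by simp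
  finally show ?thesis .
qed

lemma pdeg_0 [simp]: "pdeg 0 = -\<infinity>"
  by (simp add: pdeg_def)

lemma pdeg_1 [simp]: "pdeg 1 = 0"
  by (simp add: pdeg_def)

lemma pdeg_X: "pdeg [:0, 1:] = 1"
  by (simp add: pdeg_def)

lemma pdeg_const: "c \<noteq> 0 \<Longrightarrow> pdeg [:c:] = 0"
  by (simp add: pdeg_def)

lemma pdeg_mult: "pdeg (p * q) = pdeg p + pdeg q"
  by (cases "p = 0"; cases "q = 0") (simp_all add: pdeg_def degree_mult_eq)

lemma minus_infinity_plus_pdeg [simp]: "-\<infinity> + pdeg p = -\<infinity>"
  by (simp add: pdeg_def)

lemma pdeg_eq_ereal_iff: "pdeg p = ereal (real d) \<longleftrightarrow> p \<noteq> 0 \<and> degree p = d"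
  by (auto simp: pdeg_def)

lemma general_position_cc: "general_position m f \<Longrightarrow> \<forall>j\<le>m. cc m f n j \<noteq> 0"
  by (simp add: general_position_def)

lemma acoef_nonzero:
  assumes "\<forall>j\<le>m. cc m f n j \<noteq> 0" "1 \<le> j" "j \<le> m"
  shows "acoef m f n j \<noteq> 0"
  using assms by (simp add: acoef_def)

lemma Max_pdeg_Mmat_row:
  assumes "2 \<le> i" "i \<le> m + 1" "acoef m f n (m + 2 - i) \<noteq> 0"
  shows "Max ((\<lambda>t. pdeg (Mmat m f n i t * B t)) ` {1..m+1}) = max (pdeg (B (i - 1))) (pdeg (B i))"
proof (rule Max_eqI)
  fix y
  assume "y \<in> (\<lambda>t. pdeg (Mmat m f n i t * B t)) ` {1..m+1}"
  then show "y \<le> max (pdeg (B (i - 1))) (pdeg (B i))"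
    using assms by (auto simp: Mmat_row pdeg_mult pdeg_const)
next
  have "pdeg (Mmat m f n i (i - 1) * B (i - 1)) = pdeg (B (i - 1))"
       "pdeg (Mmat m f n i i * B i) = pdeg (B i)"
    using assms by (simp_all add: Mmat_row pdeg_mult pdeg_const)
  moreover have "i - 1 \<in> {1..m+1}" "i \<in> {1..m+1}"
    using assms by auto
  ultimately show "max (pdeg (B (i - 1))) (pdeg (B i)) \<in> (\<lambda>t. pdeg (Mmat m f n i t * B t)) ` {1..m+1}"
    by (metis (no_types, lifting) image_eqI max_def)
qed simp

text \<open>
  The degree predicted for entry \<open>(i, s)\<close> of a product of \<open>N\<close> matrices \<open>M\<close>, so
  \<open>A[n]\<close> corresponds to \<open>N = n + 1\<close>. With \<open>w\<close> passages a path takes \<open>i - s + w (m + 1)\<close>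
  forward and \<open>d - w (m + 1)\<close> waiting steps; both are nonnegative for \<open>w = d div (m + 1)\<close>
  exactly under the first two conditions, and the third excludes waiting at vertex \<open>1\<close>,
  which has no loop.
\<close>
definition path_deg :: "nat \<Rightarrow> nat \<Rightarrow> nat \<Rightarrow> nat \<Rightarrow> ereal" where
  "path_deg m N i s =
    (let d = int N + int s - int i in
     if 0 \<le> d \<and> (s \<le> i \<or> int m + 1 \<le> d) \<and> \<not> (i = 1 \<and> s = 1 \<and> int N < int m + 1)
     then ereal (real_of_int (d div (int m + 1))) else -\<infinity>)"

lemma path_deg_eq:
  assumes "int N + int s - int i = d"
    and "(0 \<le> d \<and> (s \<le> i \<or> int m + 1 \<le> d) \<and> \<not> (i = 1 \<and> s = 1 \<and> int N < int m + 1)) = P"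
  shows "path_deg m N i s = (if P then ereal (real_of_int (d div (int m + 1))) else -\<infinity>)"
  unfolding path_deg_def Let_def assms by (rule refl)

lemma path_deg_1:
  assumes "1 \<le> i" "i \<le> m + 1" "1 \<le> s" "s \<le> m + 1"
  shows "path_deg m 1 i s =
    (if i = 1 then (if s = m + 1 then 1 else -\<infinity>) else if s = i - 1 \<or> s = i then 0 else -\<infinity>)"
proof (cases "i = 1")
  case True
  have "path_deg m 1 i s = (if s = m + 1 then ereal (real_of_int (int s div (int m + 1))) else -\<infinity>)"
    by (rule path_deg_eq) (use assms True in linarith)+
  then show ?thesis
    using True by (auto simp: add.commute)
next
  case False
  have "path_deg m 1 i s =
      (if s = i - 1 \<or> s = i then ereal (real_of_int ((1 + int s - int i) div (int m + 1))) else -\<infinity>)"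
    by (rule path_deg_eq) (use assms False in linarith)+
  moreover have "(1 + int s - int i) div (int m + 1) = 0" if "s = i - 1 \<or> s = i"
    using that assms False by (auto intro: div_pos_pos_trivial)
  ultimately show ?thesis
    using False by (auto simp: zero_ereal_def)
qed

lemma path_deg_Suc_first_row:
  assumes "1 \<le> N" "1 \<le> s" "s \<le> m + 1"
  shows "path_deg m (Suc N) 1 s = path_deg m N (m + 1) s + 1"
proof -
  define d where "d = int N + int s - int (m + 1)"
  have "path_deg m (Suc N) 1 s =
      (if 0 \<le> d then ereal (real_of_int ((d + (int m + 1)) div (int m + 1))) else -\<infinity>)"
    by (rule path_deg_eq) (use assms in \<open>simp_all add: d_def, linarith\<close>)
  moreover have "path_deg m N (m + 1) s =
      (if 0 \<le> d then ereal (real_of_int (d div (int m + 1))) else -\<infinity>)"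
    by (rule path_deg_eq) (use assms in \<open>simp_all add: d_def, linarith\<close>)
  ultimately show ?thesis
    by (simp add: one_ereal_def)
qed

lemma path_deg_Suc_row:
  assumes "1 \<le> N" "2 \<le> i" "i \<le> m + 1" "1 \<le> s" "s \<le> m + 1"
  shows "path_deg m (Suc N) i s = max (path_deg m N (i - 1) s) (path_deg m N i s)"
proof -
  define d where "d = int N + int s - int i + 1"
  define P1 where "P1 = (0 \<le> d \<and> (s \<le> i - 1 \<or> int m + 1 \<le> d) \<and> \<not> (i = 2 \<and> s = 1 \<and> int N < int m + 1))"
  define P2 where "P2 = (0 \<le> d - 1 \<and> (s \<le> i \<or> int m + 1 \<le> d - 1))"
  define P3 where "P3 = (0 \<le> d \<and> (s \<le> i \<or> int m + 1 \<le> d))"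
  have e1: "path_deg m N (i - 1) s = (if P1 then ereal (real_of_int (d div (int m + 1))) else -\<infinity>)"
    by (rule path_deg_eq) (use assms in \<open>unfold d_def P1_def, linarith+\<close>)
  have e2: "path_deg m N i s = (if P2 then ereal (real_of_int ((d - 1) div (int m + 1))) else -\<infinity>)"
    by (rule path_deg_eq) (use assms in \<open>unfold d_def P2_def, linarith+\<close>)
  have e3: "path_deg m (Suc N) i s = (if P3 then ereal (real_of_int (d div (int m + 1))) else -\<infinity>)"
    by (rule path_deg_eq) (use assms in \<open>unfold d_def P3_def, linarith+\<close>)
  have "P3 \<longleftrightarrow> P1 \<or> P2"
    using assms unfolding P1_def P2_def P3_def d_def by linarith
  moreover have "(d - 1) div (int m + 1) \<le> d div (int m + 1)"
    by (simp add: zdiv_mono1)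
  moreover have "d div (int m + 1) = (d - 1) div (int m + 1)" if "\<not> P1" "P2"
  proof -
    have "1 \<le> d" "d < int m + 1"
      using that assms unfolding P1_def P2_def d_def by linarith+
    then show ?thesis
      by (simp add: div_pos_pos_trivial)
  qed
  ultimately show ?thesis
    unfolding e1 e2 e3 by (cases P1) (auto simp: max_def)
qed

lemma pdeg_Amat:
  assumes gp: "general_position m f" and "1 \<le> i" "i \<le> m + 1" "1 \<le> s" "s \<le> m + 1"
  shows "pdeg (Amat m f n i s) = path_deg m (Suc n) i s"
  using assms(2-)
proof (induction n arbitrary: i s)
  case 0
  show ?case
  proof (cases "i = 1")
    case True
    then show ?thesis
      using 0 path_deg_1[of 1 m s] by (simp add: Mmat_def pdeg_X)
  next
    case False
    then show ?thesis
      using 0 acoef_nonzero[OF general_position_cc[OF gp], of "m + 2 - i"] path_deg_1[of i m s]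
      by (simp add: Mmat_row pdeg_const)
  qed
next
  case (Suc n)
  show ?case
  proof (cases "i = 1")
    case True
    have "pdeg (Amat m f (Suc n) 1 s) = pdeg ([:0, 1:] * Amat m f n (m + 1) s)"
      by (simp only: Amat.simps matmul_Mmat_first_row)
    also have "\<dots> = path_deg m (Suc n) (m + 1) s + 1"
      unfolding pdeg_mult pdeg_X using Suc.IH[of "m + 1" s] Suc.prems by (simp add: add.commute)
    also have "\<dots> = path_deg m (Suc (Suc n)) 1 s"
      using path_deg_Suc_first_row[of "Suc n" s m] Suc.prems by simp
    finally show ?thesis
      using True by simp
  next
    case False
    then have i: "2 \<le> i" "i \<le> m + 1"
      using Suc.prems by auto
    have "pdeg (Amat m f (Suc n) i s) =
        Max ((\<lambda>t. pdeg (Mmat m f (Suc n) i t * Amat m f n t s)) ` {1..m+1})"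
      using gp Suc.prems by (simp add: general_position_def)
    also have "\<dots> = max (pdeg (Amat m f n (i - 1) s)) (pdeg (Amat m f n i s))"
      using i acoef_nonzero[OF general_position_cc[OF gp], of "m + 2 - i"] by (intro Max_pdeg_Mmat_row) auto
    also have "\<dots> = path_deg m (Suc (Suc n)) i s"
      using path_deg_Suc_row[of "Suc n" i m s] Suc.prems i by (simp add: Suc.IH)
    finally show ?thesis .
  qed
qed

lemma path_deg_last_row:
  assumes "n + 1 = m + (m + 1) * k + l" "l \<le> m" "j \<le> m"
  shows "path_deg m (Suc n) (m + 1) (m + 1 - j) = ereal (real (if j < l then k + 1 else k))"
proof -
  have "j \<le> n + 1"
    using assms by linarith
  then have "path_deg m (Suc n) (m + 1) (m + 1 - j) =
      ereal (real_of_int ((int (n + 1) - int j) div (int m + 1)))"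
    using assms(3) by (subst path_deg_eq[where d = "int (n + 1) - int j" and P = True]) auto
  moreover have "int (n + 1) - int j =
      (if j < l then int (l - 1 - j) + (int m + 1) * int (k + 1)
       else int (m + l - j) + (int m + 1) * int k)"
    using assms by (auto simp: algebra_simps)
  moreover have "int (l - 1 - j) < int m + 1" "j < l \<or> int (m + l - j) < int m + 1"
    using assms by linarith+
  ultimately show ?thesis
    using assms by (auto simp: div_pos_pos_trivial)
qed

lemma sum_atMost_if_less:
  assumes "l \<le> Suc m"
  shows "(\<Sum>j\<le>m. if j < l then k + 1 else k) = (m + 1) * k + (l :: nat)"
proof -
  have "(\<Sum>j\<le>m. if j < l then k + 1 else k) = (\<Sum>j\<le>m. k + (if j < l then 1 else 0))"
    by (intro sum.cong) auto
  also have "\<dots> = (m + 1) * k + (\<Sum>j\<le>m. if j < l then 1 else 0)"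
    by (simp add: sum.distrib)
  also have "(\<Sum>j\<le>m. if j < l then 1 else 0) = (\<Sum>j<l. 1 :: nat)"
    using assms by (intro sum.mono_neutral_cong_right) auto
  finally show ?thesis
    by simp
qed

theorem theorem3:
  fixes m n k l :: nat and f :: "nat \<Rightarrow> complex fps"
  assumes gp: "general_position m f"
    and nk: "n + 1 = m + (m + 1) * k + l"
    and l: "l \<le> m"
  shows "(l = 0 \<longrightarrow>
            (\<forall>s\<in>{1..m+1}. pdeg (Amat m f n (m + 1) s) = ereal (real k)) \<and>
            hp_typeI m f (\<lambda>_. k) (\<lambda>j. Amat m f n (m + 1) (m + 1 - j)) \<and>
            (\<Sum>j\<le>m. k) + m = n + 1 \<and>
            bigO_z (\<Sum>j\<le>m. fps_of_poly (Amat m f n (m + 1) (m + 1 - j)) * f j) (n + 1))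
       \<and> (1 \<le> l \<longrightarrow>
            (\<forall>s<l. pdeg (Amat m f n (m + 1) (m + 1 - s)) = ereal (real (k + 1))) \<and>
            (\<forall>s\<in>{l..m}. pdeg (Amat m f n (m + 1) (m + 1 - s)) = ereal (real k)) \<and>
            hp_typeI m f (\<lambda>j. if j < l then k + 1 else k) (\<lambda>j. Amat m f n (m + 1) (m + 1 - j)) \<and>
            (\<Sum>j\<le>m. if j < l then k + 1 else k) + m = n + 1 \<and>
            bigO_z (\<Sum>j\<le>m. fps_of_poly (Amat m f n (m + 1) (m + 1 - j)) * f j) (n + 1))"
proof -
  have cc: "\<forall>n. \<forall>j\<le>m. cc m f n j \<noteq> 0"
    using general_position_cc[OF gp] by blast
  define kk where "kk j = (if j < l then k + 1 else k)" for j
  define Q where "Q j = Amat m f n (m + 1) (m + 1 - j)" for j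
  have deg: "pdeg (Q j) = ereal (real (kk j))" if "j \<le> m" for j
    using pdeg_Amat[OF gp, of "m + 1" "m + 1 - j" n] path_deg_last_row[OF nk l that] that
    by (simp add: Q_def kk_def)
  have order: "(\<Sum>j\<le>m. kk j) + m = n + 1"
    using sum_atMost_if_less[of l m k] nk l by (simp add: kk_def)
  have remainder: "bigO_z (\<Sum>j\<le>m. fps_of_poly (Q j) * f j) (n + 1)"
    unfolding Q_def bigO_z_def last_row_remainder[OF cc] fps_X_power_mult_nth by simp
  have "hp_typeI m f kk Q"
    using deg remainder unfolding hp_typeI_def order pdeg_eq_ereal_iff by auto
  moreover have "pdeg (Amat m f n (m + 1) s) = ereal (real k)" if "l = 0" "s \<in> {1..m+1}" for s
    using deg[of "m + 1 - s"] that by (auto simp: Q_def kk_def)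
  ultimately show ?thesis
    using deg order remainder l unfolding Q_def kk_def by (auto simp: fun_eq_iff)
qed

end
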